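(* For any constant $\delta\in(0,1)$ there exists an infinite family of graphs $\{G_n\}$ such that $G_n$ has $n$ nodes and contains a clique of size $\delta n$, but for all $\epsilon<\min\left\{\frac{1-\delta}{1+\delta},\frac19\right\}$ and for sufficiently large $n$, the shingles algorithm cannot find an $\epsilon$-near clique with at least $(1-\epsilon)\delta n$ nodes in $G_n$ (i.e., whatever the random IDs drawn, no candidate set it can output is an $\epsilon$-near clique with at least $(1-\epsilon)\delta n$ nodes).
   Context: Each undirected edge $\{u,v\}$ is counted as two directed edges. For $0\le\epsilon\le1$, a set $D$ of nodes of a graph $(V,E)$ is an $\epsilon$-near clique if $|\{(u,v)\in D\times D : \{u,v\}\in E\}|\ge(1-\epsilon)|D|(|D|-1)$. The shingles algorithm (a distributed algorithm): each node picks a random ID from a space large enough that collisions are negligible and sends it to all neighbors; each node then takes as its label the smallest ID among itself and its neighbors; nodes with the same label form a candidate set; each candidate set computes its density by having every member send its degree within the set to the set's leader (the node whose ID is the label), and only sets of sufficient size and density survive; conflicts between overlapping candidate sets are resolved in favor of the larger set, and for equal sizes in favor of the smaller label. The output near-cliques are the surviving candidate sets. *)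

theory Defs
  imports Complex_Main
begin

definition simple_graph :: "nat \<Rightarrow> (nat \<Rightarrow> nat \<Rightarrow> bool) \<Rightarrow> bool" where
  "simple_graph n E \<longleftrightarrow>
     (\<forall>u v. E u v \<longrightarrow> E v u) \<and> (\<forall>u. \<not> E u u) \<and>
     (\<forall>u v. E u v \<longrightarrow> u < n \<and> v < n)"

definition is_clique :: "(nat \<Rightarrow> nat \<Rightarrow> bool) \<Rightarrow> nat set \<Rightarrow> bool" where
  "is_clique E C \<longleftrightarrow> (\<forall>u\<in>C. \<forall>v\<in>C. u \<noteq> v \<longrightarrow> E u v)"

text \<open>Number of directed edges inside D (each undirected edge counted twice).\<close>
definition dir_edges :: "(nat \<Rightarrow> nat \<Rightarrow> bool) \<Rightarrow> nat set \<Rightarrow> nat" where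
  "dir_edges E D = card {(u, v). u \<in> D \<and> v \<in> D \<and> E u v}"

definition near_clique :: "real \<Rightarrow> (nat \<Rightarrow> nat \<Rightarrow> bool) \<Rightarrow> nat set \<Rightarrow> bool" where
  "near_clique \<epsilon> E D \<longleftrightarrow>
     real (dir_edges E D) \<ge> (1 - \<epsilon>) * real (card D) * (real (card D) - 1)"

definition shingle_label :: "nat \<Rightarrow> (nat \<Rightarrow> nat \<Rightarrow> bool) \<Rightarrow> (nat \<Rightarrow> nat) \<Rightarrow> nat \<Rightarrow> nat" where
  "shingle_label n E ids v = Min (ids ` ({v} \<union> {u. u < n \<and> E v u}))"

definition candidate_sets :: "nat \<Rightarrow> (nat \<Rightarrow> nat \<Rightarrow> bool) \<Rightarrow> (nat \<Rightarrow> nat) \<Rightarrow> nat set set" where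
  "candidate_sets n E ids =
     {D. \<exists>v<n. D = {u. u < n \<and> shingle_label n E ids u = shingle_label n E ids v}}"

end

theory Submission
  imports Defs
begin

text \<open>
  The graph on \<open>n = 2 (h + g)\<close> nodes, \<open>h \<approx> \<delta> n / 2\<close>, is a clique \<open>A \<union> A'\<close> with
  \<open>|A| = |A'| = h\<close>, plus independent sets \<open>B\<close>, \<open>B'\<close> of size \<open>g\<close>, with \<open>A\<close> completely
  joined to \<open>B\<close> and \<open>A'\<close> to \<open>B'\<close>. The label of a candidate set is the ID of its leader, a
  common closed neighbour of all members whose ID is minimal over all their closed
  neighbourhoods. A leader in \<open>A\<close> yields \<open>A \<union> B\<close>, \<open>A \<union> A' \<union> B\<close> or a subset of \<open>A' \<union> B\<close>; a
  leader in \<open>B\<close> yields a subset of \<open>A\<close> plus the leader; \<open>A'\<close> and \<open>B'\<close> are symmetric.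
  \<open>A \<union> A' \<union> B\<close> is too sparse since \<open>B\<close> misses \<open>A'\<close>; \<open>A \<union> B\<close> is large enough only if
  \<open>\<delta> \<le> 9/16\<close>, and then \<open>B\<close> makes it too sparse; a subset of \<open>A' \<union> B\<close> has at most
  \<open>h (h - 1)\<close> edges; and \<open>A\<close> plus one node is too small.
\<close>

definition closed_nbhd :: "nat \<Rightarrow> (nat \<Rightarrow> nat \<Rightarrow> bool) \<Rightarrow> nat \<Rightarrow> nat set" where
  "closed_nbhd n E v = {v} \<union> {u. u < n \<and> E v u}"

lemma finite_closed_nbhd: "finite (closed_nbhd n E v)"
  unfolding closed_nbhd_def by (rule finite_subset[of _ "{v} \<union> {..<n}"]) auto

lemma shingle_label_closed_nbhd: "shingle_label n E ids v = Min (ids ` closed_nbhd n E v)"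
  unfolding shingle_label_def closed_nbhd_def ..

lemma shingle_label_le: "u \<in> closed_nbhd n E v \<Longrightarrow> shingle_label n E ids v \<le> ids u"
  unfolding shingle_label_closed_nbhd by (simp add: finite_closed_nbhd)

lemma shingle_label_attained: "\<exists>x\<in>closed_nbhd n E v. shingle_label n E ids v = ids x"
proof -
  have "shingle_label n E ids v \<in> ids ` closed_nbhd n E v"
    unfolding shingle_label_closed_nbhd
    by (rule Min_in) (auto simp: finite_closed_nbhd closed_nbhd_def)
  then show ?thesis by auto
qed

lemma shingle_label_eqI:
  assumes "x \<in> closed_nbhd n E v" and "\<And>u. u \<in> closed_nbhd n E v \<Longrightarrow> ids x \<le> ids u"
  shows "shingle_label n E ids v = ids x"
  unfolding shingle_label_closed_nbhd
  by (rule Min_eqI) (use assms finite_closed_nbhd in auto)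

text \<open>Because the IDs are distinct, the label of a candidate set is the ID of a unique node,
  its leader, which is a closed neighbour of every member.\<close>
lemma candidate_set_leader:
  assumes "D \<in> candidate_sets n E ids" and "inj_on ids {0..<n}"
  obtains x where "x < n" and "D = {u. u < n \<and> shingle_label n E ids u = ids x}"
    and "\<And>v. v \<in> D \<Longrightarrow> x \<in> closed_nbhd n E v \<and> (\<forall>u\<in>closed_nbhd n E v. ids x \<le> ids u)"
proof -
  obtain w where "w < n" and D_w: "D = {u. u < n \<and> shingle_label n E ids u = shingle_label n E ids w}"
    using assms(1) unfolding candidate_sets_def by blast
  obtain x where "x \<in> closed_nbhd n E w" and x: "shingle_label n E ids w = ids x"
    using shingle_label_attained by blast
  with \<open>w < n\<close> have "x < n" by (auto simp: closed_nbhd_def)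
  have D: "D = {u. u < n \<and> shingle_label n E ids u = ids x}" using D_w x by simp
  have "x \<in> closed_nbhd n E v \<and> (\<forall>u\<in>closed_nbhd n E v. ids x \<le> ids u)" if "v \<in> D" for v
  proof -
    from that D have "v < n" and label_v: "shingle_label n E ids v = ids x" by simp_all
    obtain x' where x': "x' \<in> closed_nbhd n E v" "shingle_label n E ids v = ids x'"
      using shingle_label_attained by blast
    have "x' < n" using x'(1) \<open>v < n\<close> by (auto simp: closed_nbhd_def)
    with \<open>x < n\<close> x'(2) label_v assms(2) have "x' = x" by (auto simp: inj_on_def)
    with x'(1) label_v show ?thesis by (metis shingle_label_le)
  qed
  with \<open>x < n\<close> D show thesis by (rule that)
qed

lemma not_near_clique_if_sparse:
  assumes "real (dir_edges E D) < (1 - \<epsilon>) * real (card D) * (real (card D) - 1)"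
  shows "\<not> near_clique \<epsilon> E D"
  using assms unfolding near_clique_def by linarith

lemma card_distinct_pairs:
  assumes "finite A"
  shows "card {(u, v). u \<in> A \<and> v \<in> A \<and> u \<noteq> v} = card A * (card A - 1)"
proof -
  have "{(u, v). u \<in> A \<and> v \<in> A \<and> u \<noteq> v} = A \<times> A - (\<lambda>a. (a, a)) ` A" by auto
  moreover have "card ((\<lambda>a. (a, a)) ` A) = card A" by (rule card_image) (auto simp: inj_on_def)
  ultimately have "card {(u, v). u \<in> A \<and> v \<in> A \<and> u \<noteq> v} = card A * card A - card A"
    using assms by (simp add: card_Diff_subset card_cartesian_product image_subset_iff)
  then show ?thesis by (simp add: diff_mult_distrib2)
qed

lemma dir_edges_le_clique_plus_biclique:
  assumes "finite K" and "finite A" and "finite B"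
    and edges: "\<And>u v. u \<in> D \<Longrightarrow> v \<in> D \<Longrightarrow> E u v \<Longrightarrow>
      u \<noteq> v \<and> (u \<in> K \<and> v \<in> K \<or> u \<in> A \<and> v \<in> B \<or> u \<in> B \<and> v \<in> A)"
  shows "real (dir_edges E D) \<le> real (card K) * (real (card K) - 1) + 2 * real (card A) * real (card B)"
proof -
  let ?KK = "{(u, v). u \<in> K \<and> v \<in> K \<and> u \<noteq> v}"
  have fin: "finite ?KK" by (rule finite_subset[of _ "K \<times> K"]) (use assms(1) in auto)
  have "dir_edges E D \<le> card (?KK \<union> A \<times> B \<union> B \<times> A)"
    unfolding dir_edges_def using assms fin by (intro card_mono) auto
  also have "\<dots> \<le> card ?KK + card (A \<times> B) + card (B \<times> A)"
    by (meson card_Un_le add_right_mono le_trans)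
  also have "\<dots> = card K * (card K - 1) + 2 * (card A * card B)"
    using assms by (simp add: card_distinct_pairs card_cartesian_product)
  finally have "real (dir_edges E D) \<le> real (card K * (card K - 1)) + 2 * real (card A * card B)"
    by linarith
  also have "\<dots> = real (card K) * (real (card K) - 1) + 2 * real (card A) * real (card B)"
    by (cases "card K") (auto simp: algebra_simps)
  finally show ?thesis .
qed

lemma edge_deficit_whole_clique_with_side:
  fixes H G \<delta> \<epsilon> :: real
  assumes "0 \<le> H" "0 \<le> G" "H \<le> \<delta> * (H + G) + 1" "0 \<le> \<epsilon>"
    and "3 < ((1 - \<delta>) - \<epsilon> * (1 + \<delta>)) * (H + G)"
  shows "2 * H * (2 * H - 1) + 2 * H * G < (1 - \<epsilon>) * (2 * H + G) * (2 * H + G - 1)"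
proof -
  have "(1 + \<epsilon>) * H \<le> (1 + \<epsilon>) * (\<delta> * (H + G) + 1)"
    using assms by (intro mult_left_mono) auto
  with assms(5) have gap: "0 < (1 - \<epsilon>) * (2 * H + G) - 2 * H - (1 - \<epsilon>)"
    by (simp add: algebra_simps)
  have "H + G \<noteq> 0" using assms(5) by auto
  then have "0 < 2 * H + G" using assms(1,2) by linarith
  with gap have "0 < (2 * H + G) * ((1 - \<epsilon>) * (2 * H + G) - 2 * H - (1 - \<epsilon>))" by simp
  moreover have "(1 - \<epsilon>) * (2 * H + G) * (2 * H + G - 1) - (2 * H * (2 * H - 1) + 2 * H * G)
      = (2 * H + G) * ((1 - \<epsilon>) * (2 * H + G) - 2 * H - (1 - \<epsilon>)) + 2 * H"
    by (simp add: algebra_simps)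
  ultimately show ?thesis using assms(1) by linarith
qed

text \<open>With \<open>\<epsilon> < 1/9\<close>, the hypothesis \<open>2 (1 - \<epsilon>) \<delta> \<le> 1\<close> forces \<open>\<delta> \<le> 9/16\<close>,
  so the independent side, of size about \<open>(1 - \<delta>) (H + G)\<close>, is large.\<close>
lemma edge_deficit_half_clique_with_side:
  fixes H G \<delta> \<epsilon> :: real
  assumes "0 \<le> H" "0 \<le> \<epsilon>" "\<epsilon> < 1/9" "0 \<le> \<delta>" "\<delta> < 1"
    and "2 * (1 - \<epsilon>) * \<delta> \<le> 1" "(1 - \<delta>) * (H + G) - 1 \<le> G" "100 \<le> H + G"
  shows "H * (H - 1) + 2 * H * G < (1 - \<epsilon>) * (H + G) * (H + G - 1)"
proof -
  define T where "T = H + G"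
  have "\<epsilon> * \<delta> \<le> (1/9) * \<delta>" using assms by (intro mult_right_mono) auto
  then have d: "7/16 \<le> 1 - \<delta>" using assms(6) by (simp add: algebra_simps)
  have "(7/16) * T \<le> (1 - \<delta>) * T" using d assms(8) by (intro mult_right_mono) (auto simp: T_def)
  then have "0 \<le> (1 - \<delta>) * T - 1" using assms(8) by (simp add: T_def)
  then have "((1 - \<delta>) * T - 1)^2 \<le> G^2" using assms(7) by (intro power_mono) (auto simp: T_def)
  moreover have "((1 - \<delta>) * T - 1)^2 = (1 - \<delta>)^2 * T^2 - 2 * ((1 - \<delta>) * T) + 1"
    by (simp add: power2_eq_square algebra_simps)
  moreover have "(1 - \<delta>) * T \<le> T" using mult_right_mono[of "1 - \<delta>" 1 T] assms(4,8) d by (simp add: T_def)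
  moreover have "(7/16)^2 * T^2 \<le> (1 - \<delta>)^2 * T^2" using d by (intro mult_right_mono power_mono) auto
  moreover have "\<epsilon> * T^2 \<le> (1/9) * T^2" using assms by (intro mult_right_mono) auto
  ultimately have G_sq: "(185/2304) * T^2 - 2 * T \<le> G^2 - \<epsilon> * T^2" by (simp add: power2_eq_square)
  have "0 < T * ((185/2304) * T - 3)" using assms(8) by (simp add: T_def)
  then have "0 < (185/2304) * T^2 - 2 * T - T" by (simp add: power2_eq_square algebra_simps)
  moreover have "(1 - \<epsilon>) * T * (T - 1) - (H * (H - 1) + 2 * H * G) = G^2 - \<epsilon> * T^2 - (1 - \<epsilon>) * T + H"
    by (simp add: T_def power2_eq_square algebra_simps)
  moreover have "0 \<le> \<epsilon> * T" using assms by (simp add: T_def)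
  ultimately show ?thesis using G_sq assms(1) by (simp add: T_def algebra_simps)
qed

lemma edge_deficit_small_clique:
  fixes H d \<epsilon> :: real
  assumes "0 \<le> \<epsilon>" "\<epsilon> < 1/9" "1 \<le> H" "H \<le> 3/4 * d" "2 \<le> d"
  shows "H * (H - 1) < (1 - \<epsilon>) * d * (d - 1)"
proof -
  have "H * (H - 1) \<le> (3/4 * d) * (3/4 * d - 1)" using assms by (intro mult_mono) auto
  then have a: "H * H - H \<le> 9/16 * (d * d) - 3/4 * d" by (simp add: algebra_simps)
  have "8/9 * (d * (d - 1)) \<le> (1 - \<epsilon>) * (d * (d - 1))"
    using assms by (intro mult_right_mono) auto
  moreover have "d * (d - 1) = d * d - d" by (simp add: algebra_simps)
  moreover have "(1 - \<epsilon>) * d * (d - 1) = (1 - \<epsilon>) * (d * (d - 1))" by simp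
  ultimately have b: "8/9 * (d * d) - 8/9 * d \<le> (1 - \<epsilon>) * d * (d - 1)" by linarith
  have c: "2 * d \<le> d * d" using assms by simp
  have "H * (H - 1) = H * H - H" by (simp add: algebra_simps)
  with a b c assms show ?thesis by linarith
qed

text \<open>Blocks 0, 1, 2, 3 are the sets \<open>A\<close>, \<open>A'\<close>, \<open>B\<close>, \<open>B'\<close>.\<close>
definition block_adj :: "nat \<Rightarrow> nat \<Rightarrow> bool" where
  "block_adj a b \<longleftrightarrow>
     (a \<le> 1 \<and> b \<le> 1) \<or> (a = 0 \<and> b = 2) \<or> (a = 2 \<and> b = 0) \<or> (a = 1 \<and> b = 3) \<or> (a = 3 \<and> b = 1)"

definition block_graph :: "nat \<Rightarrow> (nat \<Rightarrow> nat) \<Rightarrow> nat \<Rightarrow> nat \<Rightarrow> bool" where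
  "block_graph n blk u v \<longleftrightarrow> u < n \<and> v < n \<and> u \<noteq> v \<and> block_adj (blk u) (blk v)"

lemma simple_graph_block_graph: "simple_graph n (block_graph n blk)"
  unfolding simple_graph_def block_graph_def block_adj_def by auto

definition block_swap :: "nat \<Rightarrow> nat" where
  "block_swap a = (if a = 0 then 1 else if a = 1 then 0 else if a = 2 then 3 else if a = 3 then 2 else a)"

lemma block_swap_eq_iff: "block_swap a = i \<longleftrightarrow> a = block_swap i"
  by (auto simp: block_swap_def)

lemma block_graph_swap: "block_graph n (block_swap \<circ> blk) = block_graph n blk"
  unfolding block_graph_def block_adj_def block_swap_def by (intro ext) auto

locale four_block_graph =
  fixes n :: nat and blk :: "nat \<Rightarrow> nat"
  assumes blk_less_4: "blk u < 4"
begin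

definition part :: "nat \<Rightarrow> nat set" where
  "part i = {u. u < n \<and> blk u = i}"

lemma finite_part [simp]: "finite (part i)"
  unfolding part_def by simp

lemma disjoint_parts: "i \<noteq> j \<Longrightarrow> part i \<inter> part j = {}"
  unfolding part_def by auto

lemma mem_closed_nbhd_iff:
  "u \<in> closed_nbhd n (block_graph n blk) v \<longleftrightarrow>
     u = v \<or> u < n \<and> v < n \<and> block_adj (blk v) (blk u)"
  unfolding closed_nbhd_def block_graph_def by auto

lemma four_block_graph_swap: "four_block_graph (block_swap \<circ> blk)"
  using blk_less_4 by unfold_locales (auto simp: block_swap_def)

lemma part_swap: "four_block_graph.part n (block_swap \<circ> blk) i = part (block_swap i)"
  unfolding four_block_graph.part_def[OF four_block_graph_swap] part_def by (auto simp: block_swap_eq_iff)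

text \<open>A member of the candidate set in block 0 (resp. 1) shows the leader all IDs of blocks
  0, 1, 2 (resp. 0, 1, 3), which cover the closed neighbourhoods of blocks 0 and 2 (resp. 1).\<close>
lemma candidate_set_leader_in_part0:
  assumes x: "x < n" "blk x = 0"
    and D: "D = {u. u < n \<and> shingle_label n (block_graph n blk) ids u = ids x}"
    and leader: "\<And>v. v \<in> D \<Longrightarrow> x \<in> closed_nbhd n (block_graph n blk) v \<and>
      (\<forall>u\<in>closed_nbhd n (block_graph n blk) v. ids x \<le> ids u)"
  shows "D = part 0 \<union> part 2 \<or> D = part 0 \<union> part 1 \<union> part 2 \<or> D \<subseteq> part 1 \<union> part 2"
proof -
  let ?N = "closed_nbhd n (block_graph n blk)"
  have in_part: "v \<in> part 0 \<union> part 1 \<union> part 2" if "v \<in> D" for v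
    using leader[OF that] x that D by (auto simp: mem_closed_nbhd_iff part_def block_adj_def)
  have in_D: "v \<in> D" if "v < n" "blk v \<le> 2" "w \<in> D" "?N v \<subseteq> ?N w" for v w
  proof -
    have "x \<in> ?N v" using that(1,2) x by (auto simp: mem_closed_nbhd_iff block_adj_def)
    moreover have "ids x \<le> ids u" if "u \<in> ?N v" for u
      using leader[OF \<open>w \<in> D\<close>] that \<open>?N v \<subseteq> ?N w\<close> by blast
    ultimately show ?thesis using shingle_label_eqI[of x n _ v ids] that(1) D by auto
  qed
  show ?thesis
  proof (cases "D \<inter> part 0 = {}")
    case False
    then obtain v where v: "v \<in> D" "blk v = 0" "v < n" by (auto simp: part_def)
    have part02: "part 0 \<union> part 2 \<subseteq> D"
      using v by (auto intro!: in_D[OF _ _ v(1)] simp: part_def mem_closed_nbhd_iff block_adj_def)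
    show ?thesis
    proof (cases "D \<inter> part 1 = {}")
      case False
      then obtain w where w: "w \<in> D" "blk w = 1" "w < n" by (auto simp: part_def)
      have "part 1 \<subseteq> D"
        using w by (auto intro!: in_D[OF _ _ w(1)] simp: part_def mem_closed_nbhd_iff block_adj_def)
      with part02 in_part show ?thesis by blast
    qed (use part02 in_part in blast)
  qed (use in_part in blast)
qed

lemma candidate_set_leader_in_part2:
  assumes "blk x = 2" and D: "D \<subseteq> {0..<n}"
    and leader: "\<And>v. v \<in> D \<Longrightarrow> x \<in> closed_nbhd n (block_graph n blk) v"
  shows "D \<subseteq> insert x (part 0)"
  using assms by (fastforce simp: mem_closed_nbhd_iff part_def block_adj_def)

end

locale sized_four_block_graph = four_block_graph +
  fixes h g :: nat and \<delta> \<epsilon> :: real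
  assumes card_part: "card (part 0) = h" "card (part 1) = h" "card (part 2) = g" "card (part 3) = g"
    and n_eq: "n = 2 * (h + g)"
    and delta: "0 < \<delta>" "\<delta> < 1"
    and eps: "0 \<le> \<epsilon>" "\<epsilon> < 1/9"
    and h_lower: "\<delta> * (real h + real g) \<le> real h"
    and h_upper: "real h \<le> \<delta> * (real h + real g) + 1"
    and large: "3 \<le> \<delta> * (real h + real g)"
      "3 < ((1 - \<delta>) - \<epsilon> * (1 + \<delta>)) * (real h + real g)" "100 \<le> real h + real g"
begin

abbreviation large_near_clique :: "nat set \<Rightarrow> bool" where
  "large_near_clique D \<equiv>
     near_clique \<epsilon> (block_graph n blk) D \<and> (1 - \<epsilon>) * \<delta> * real n \<le> real (card D)"

lemma sized_four_block_graph_swap: "sized_four_block_graph n (block_swap \<circ> blk) h g \<delta> \<epsilon>"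
proof -
  interpret swapped: four_block_graph n "block_swap \<circ> blk" by (rule four_block_graph_swap)
  have "card (swapped.part i) = card (part (block_swap i))" for i
    by (simp add: part_swap)
  then show ?thesis
    using card_part n_eq delta eps h_lower h_upper large
    by unfold_locales (simp_all add: block_swap_def)
qed

lemma card_lower_bound:
  assumes "(1 - \<epsilon>) * \<delta> * real n \<le> real (card D)"
  shows "16/9 * (\<delta> * (real h + real g)) \<le> real (card D)"
proof -
  have "8/9 * (\<delta> * real n) \<le> (1 - \<epsilon>) * (\<delta> * real n)"
    using eps delta by (intro mult_right_mono) auto
  with assms show ?thesis by (simp add: n_eq algebra_simps)
qed

lemma not_large_near_clique_part02: "\<not> large_near_clique (part 0 \<union> part 2)"
proof
  let ?D = "part 0 \<union> part 2"
  assume large_D: "large_near_clique ?D"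
  have card_D: "card ?D = h + g"
    using card_part by (simp add: card_Un_disjoint disjoint_parts)
  have "2 * (1 - \<epsilon>) * \<delta> \<le> 1"
  proof -
    from large_D card_D have "(2 * (1 - \<epsilon>) * \<delta>) * (real h + real g) \<le> 1 * (real h + real g)"
      by (simp add: n_eq algebra_simps)
    then show ?thesis using large(3) by (simp add: mult_le_cancel_right)
  qed
  have "real (dir_edges (block_graph n blk) ?D)
      \<le> real (card (part 0)) * (real (card (part 0)) - 1) + 2 * real (card (part 0)) * real (card (part 2))"
    by (rule dir_edges_le_clique_plus_biclique) (auto simp: block_graph_def block_adj_def part_def)
  also have "\<dots> = real h * (real h - 1) + 2 * real h * real g"
    using card_part by simp
  also have "\<dots> < (1 - \<epsilon>) * (real h + real g) * (real h + real g - 1)"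
    using \<open>2 * (1 - \<epsilon>) * \<delta> \<le> 1\<close> h_upper eps delta large(3)
    by (intro edge_deficit_half_clique_with_side) (auto simp: algebra_simps)
  also have "\<dots> = (1 - \<epsilon>) * real (card ?D) * (real (card ?D) - 1)"
    using card_D by simp
  finally show False using large_D by (simp add: not_near_clique_if_sparse)
qed

lemma not_near_clique_part012: "\<not> near_clique \<epsilon> (block_graph n blk) (part 0 \<union> part 1 \<union> part 2)"
proof (rule not_near_clique_if_sparse)
  let ?K = "part 0 \<union> part 1"
  have card_K: "card ?K = 2 * h"
    using card_part by (simp add: card_Un_disjoint disjoint_parts)
  have "?K \<inter> part 2 = {}" by (auto simp: part_def)
  then have card_D: "card (?K \<union> part 2) = 2 * h + g"
    using card_K card_part by (simp add: card_Un_disjoint)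
  have "real (dir_edges (block_graph n blk) (?K \<union> part 2))
      \<le> real (card ?K) * (real (card ?K) - 1) + 2 * real (card (part 0)) * real (card (part 2))"
    by (rule dir_edges_le_clique_plus_biclique) (auto simp: block_graph_def block_adj_def part_def)
  also have "\<dots> = 2 * real h * (2 * real h - 1) + 2 * real h * real g"
    using card_K card_part by simp
  also have "\<dots> < (1 - \<epsilon>) * (2 * real h + real g) * (2 * real h + real g - 1)"
    using h_upper eps large(2) by (intro edge_deficit_whole_clique_with_side) auto
  also have "\<dots> = (1 - \<epsilon>) * real (card (?K \<union> part 2)) * (real (card (?K \<union> part 2)) - 1)"
    using card_D by simp
  finally show "real (dir_edges (block_graph n blk) (part 0 \<union> part 1 \<union> part 2))
      < (1 - \<epsilon>) * real (card (part 0 \<union> part 1 \<union> part 2)) * (real (card (part 0 \<union> part 1 \<union> part 2)) - 1)" .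
qed

lemma not_large_near_clique_within_part12:
  assumes "D \<subseteq> part 1 \<union> part 2"
  shows "\<not> large_near_clique D"
proof
  assume large_D: "large_near_clique D"
  have "real (dir_edges (block_graph n blk) D)
      \<le> real (card (part 1)) * (real (card (part 1)) - 1) + 2 * real (card ({} :: nat set)) * real (card ({} :: nat set))"
  proof (rule dir_edges_le_clique_plus_biclique)
    fix u v assume "u \<in> D" "v \<in> D" "block_graph n blk u v"
    with assms have "u \<in> part 1 \<union> part 2" "v \<in> part 1 \<union> part 2" "block_graph n blk u v" by auto
    then show "u \<noteq> v \<and> (u \<in> part 1 \<and> v \<in> part 1 \<or> u \<in> {} \<and> v \<in> {} \<or> u \<in> {} \<and> v \<in> {})"
      by (auto simp: block_graph_def block_adj_def part_def)
  qed simp_all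
  also have "\<dots> = real h * (real h - 1)"
    using card_part by simp
  also have "\<dots> < (1 - \<epsilon>) * real (card D) * (real (card D) - 1)"
    using card_lower_bound[of D] large_D h_lower h_upper large(1) eps
    by (intro edge_deficit_small_clique) auto
  finally show False using large_D by (simp add: not_near_clique_if_sparse)
qed

lemma card_lt_within_insert_part0:
  assumes "D \<subseteq> insert x (part 0)"
  shows "real (card D) < (1 - \<epsilon>) * \<delta> * real n"
proof -
  have "card D \<le> h + 1"
    using card_mono[OF _ assms] card_insert_le_m1[of "card (part 0)" "part 0" x] card_part
    by (simp add: card_insert_if split: if_split_asm)
  with h_upper large(1) have "real (card D) < 16/9 * (\<delta> * (real h + real g))" by linarith
  then show ?thesis using card_lower_bound[of D] by linarith
qed

lemma not_large_candidate_leader_in_part02: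
  assumes x: "x < n" "blk x = 0 \<or> blk x = 2"
    and D: "D = {u. u < n \<and> shingle_label n (block_graph n blk) ids u = ids x}"
    and leader: "\<And>v. v \<in> D \<Longrightarrow> x \<in> closed_nbhd n (block_graph n blk) v \<and>
      (\<forall>u\<in>closed_nbhd n (block_graph n blk) v. ids x \<le> ids u)"
  shows "\<not> large_near_clique D"
  using x(2)
proof
  assume "blk x = 0"
  have "D = part 0 \<union> part 2 \<or> D = part 0 \<union> part 1 \<union> part 2 \<or> D \<subseteq> part 1 \<union> part 2"
    by (rule candidate_set_leader_in_part0[OF x(1) \<open>blk x = 0\<close> D leader])
  then show ?thesis
    using not_large_near_clique_part02 not_near_clique_part012 not_large_near_clique_within_part12
    by blast
next
  assume "blk x = 2"
  with D leader have "D \<subseteq> insert x (part 0)"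
    by (intro candidate_set_leader_in_part2) auto
  then have "real (card D) < (1 - \<epsilon>) * \<delta> * real n" by (rule card_lt_within_insert_part0)
  then show ?thesis by linarith
qed

text \<open>Relabelling the blocks by \<open>block_swap\<close> leaves the graph unchanged, so a leader in
  block 1 or 3 is a leader in block 0 or 2 of the swapped block structure.\<close>
theorem no_large_near_clique_candidate:
  assumes "inj_on ids {0..<n}" and "D \<in> candidate_sets n (block_graph n blk) ids"
  shows "\<not> large_near_clique D"
proof -
  interpret swapped: sized_four_block_graph n "block_swap \<circ> blk" h g \<delta> \<epsilon>
    by (rule sized_four_block_graph_swap)
  obtain x where x: "x < n" and D: "D = {u. u < n \<and> shingle_label n (block_graph n blk) ids u = ids x}"
    and leader: "\<And>v. v \<in> D \<Longrightarrow> x \<in> closed_nbhd n (block_graph n blk) v \<and>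
      (\<forall>u\<in>closed_nbhd n (block_graph n blk) v. ids x \<le> ids u)"
    using candidate_set_leader[OF assms(2,1)] by blast
  have "blk x = 0 \<or> blk x = 2 \<or> blk x = 1 \<or> blk x = 3" using blk_less_4[of x] by linarith
  then consider "blk x = 0 \<or> blk x = 2" | "(block_swap \<circ> blk) x = 0 \<or> (block_swap \<circ> blk) x = 2"
    by (auto simp: block_swap_def)
  then show ?thesis
  proof cases
    case 1
    then show ?thesis by (rule not_large_candidate_leader_in_part02[OF x _ D leader])
  next
    case 2
    then show ?thesis
      by (rule swapped.not_large_candidate_leader_in_part02[unfolded block_graph_swap, OF x _ D leader])
  qed
qed

end

definition block_of :: "nat \<Rightarrow> nat \<Rightarrow> nat \<Rightarrow> nat" where
  "block_of h g u = (if u < h then 0 else if u < 2 * h then 1 else if u < 2 * h + g then 2 else 3)"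

lemma four_block_graph_block_of: "four_block_graph (block_of h g)"
  by unfold_locales (simp add: block_of_def)

lemma part_block_of:
  assumes "n = 2 * h + 2 * g"
  shows "four_block_graph.part n (block_of h g) 0 = {..<h}"
    and "four_block_graph.part n (block_of h g) 1 = {h..<2 * h}"
    and "four_block_graph.part n (block_of h g) 2 = {2 * h..<2 * h + g}"
    and "four_block_graph.part n (block_of h g) 3 = {2 * h + g..<2 * h + 2 * g}"
  using assms by (auto simp: four_block_graph.part_def[OF four_block_graph_block_of] block_of_def)

lemma is_clique_block_of: "2 * h \<le> n \<Longrightarrow> is_clique (block_graph n (block_of h g)) {..<2 * h}"
  unfolding is_clique_def block_graph_def block_adj_def block_of_def by auto

definition clique_half :: "real \<Rightarrow> nat \<Rightarrow> nat" where
  "clique_half \<delta> n = nat \<lceil>\<delta> * real n / 2\<rceil>"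

definition side_size :: "real \<Rightarrow> nat \<Rightarrow> nat" where
  "side_size \<delta> n = n div 2 - clique_half \<delta> n"

lemma clique_half_bounds:
  assumes "0 < \<delta>" "\<delta> < 1" "even n" "2 / (1 - \<delta>) \<le> real n"
  shows "n = 2 * clique_half \<delta> n + 2 * side_size \<delta> n"
    and "\<delta> * real n / 2 \<le> real (clique_half \<delta> n)"
    and "real (clique_half \<delta> n) \<le> \<delta> * real n / 2 + 1"
proof -
  have "0 \<le> \<delta> * real n / 2" using assms by simp
  then have real_half: "real (clique_half \<delta> n) = real_of_int \<lceil>\<delta> * real n / 2\<rceil>"
    unfolding clique_half_def by simp
  then show "\<delta> * real n / 2 \<le> real (clique_half \<delta> n)" by simp
  show upper: "real (clique_half \<delta> n) \<le> \<delta> * real n / 2 + 1"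
    using real_half ceiling_correct[of "\<delta> * real n / 2"] by linarith
  have "2 \<le> (1 - \<delta>) * real n" using assms by (simp add: field_simps)
  with upper have "real (clique_half \<delta> n) \<le> real n / 2" by (simp add: algebra_simps)
  moreover have "real (n div 2) = real n / 2" using assms(3) by (auto elim: evenE)
  ultimately have "clique_half \<delta> n \<le> n div 2" by linarith
  then show "n = 2 * clique_half \<delta> n + 2 * side_size \<delta> n"
    unfolding side_size_def using assms(3) by (auto elim: evenE)
qed

definition size_threshold :: "real \<Rightarrow> real \<Rightarrow> real" where
  "size_threshold \<delta> \<epsilon> = 2 * (3 / \<delta> + 4 / ((1 - \<delta>) - \<epsilon> * (1 + \<delta>)) + 100)"

lemma sized_four_block_graph_block_of:
  assumes \<delta>: "0 < \<delta>" "\<delta> < 1" and \<epsilon>: "0 \<le> \<epsilon>" "\<epsilon> < min ((1 - \<delta>) / (1 + \<delta>)) (1/9)"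
    and n: "even n" "2 / (1 - \<delta>) \<le> real n" "size_threshold \<delta> \<epsilon> \<le> real n"
  shows "sized_four_block_graph n (block_of (clique_half \<delta> n) (side_size \<delta> n))
    (clique_half \<delta> n) (side_size \<delta> n) \<delta> \<epsilon>"
proof -
  define h where "h = clique_half \<delta> n"
  define g where "g = side_size \<delta> n"
  define c where "c = (1 - \<delta>) - \<epsilon> * (1 + \<delta>)"
  have n_eq: "n = 2 * h + 2 * g" and h_bounds: "\<delta> * real n / 2 \<le> real h" "real h \<le> \<delta> * real n / 2 + 1"
    using clique_half_bounds[OF \<delta> n(1,2)] unfolding h_def g_def by auto
  have T: "real n / 2 = real h + real g" using n_eq by simp
  then have "\<delta> * real n / 2 = \<delta> * (real h + real g)" by (metis times_divide_eq_right)
  with h_bounds have h_bounds': "\<delta> * (real h + real g) \<le> real h" "real h \<le> \<delta> * (real h + real g) + 1"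
    by simp_all
  have "0 < c" using \<epsilon> \<delta> unfolding c_def by (simp add: pos_less_divide_eq)
  have "3 / \<delta> + 4 / c + 100 \<le> real h + real g"
    using n(3)[unfolded size_threshold_def, folded c_def] T by simp
  moreover have "0 \<le> 3 / \<delta>" "0 \<le> 4 / c" using \<delta> \<open>0 < c\<close> by simp_all
  ultimately have "3 / \<delta> \<le> real h + real g \<and> 4 / c \<le> real h + real g \<and> 100 \<le> real h + real g"
    by (intro conjI; linarith)
  then have large: "3 \<le> \<delta> * (real h + real g)" "3 < c * (real h + real g)" "100 \<le> real h + real g"
    using \<delta> \<open>0 < c\<close> by (auto simp: field_simps)
  have n_eq': "n = 2 * (h + g)" using n_eq by simp
  show ?thesis
    unfolding h_def[symmetric] g_def[symmetric]
    using h_bounds' large \<delta> \<epsilon>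
    by (intro sized_four_block_graph.intro sized_four_block_graph_axioms.intro four_block_graph_block_of n_eq')
      (auto simp: c_def part_block_of[OF n_eq, unfolded One_nat_def])
qed

definition shingles_counterexample :: "real \<Rightarrow> nat \<Rightarrow> nat \<Rightarrow> nat \<Rightarrow> bool" where
  "shingles_counterexample \<delta> n = block_graph n (block_of (clique_half \<delta> n) (side_size \<delta> n))"

lemma infinite_even_at_least: "infinite {n :: nat. even n \<and> x \<le> real n}"
proof
  assume "finite {n :: nat. even n \<and> x \<le> real n}"
  then obtain m where "\<forall>n\<in>{n. even n \<and> x \<le> real n}. n \<le> m"
    by (auto simp: finite_nat_set_iff_bounded_le)
  moreover have "2 * (m + 1 + nat \<lceil>x\<rceil>) \<in> {n. even n \<and> x \<le> real n}"
    using real_nat_ceiling_ge[of x] by simp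
  ultimately have "2 * (m + 1 + nat \<lceil>x\<rceil>) \<le> m" by blast
  then show False by simp
qed

lemma shingles_counterexample_has_large_clique:
  assumes "0 < \<delta>" "\<delta> < 1" "even n" "2 / (1 - \<delta>) \<le> real n"
  shows "\<exists>C. C \<subseteq> {0..<n} \<and> is_clique (shingles_counterexample \<delta> n) C \<and> \<delta> * real n \<le> real (card C)"
  using clique_half_bounds[OF assms] is_clique_block_of unfolding shingles_counterexample_def
  by (intro exI[of _ "{..<2 * clique_half \<delta> n}"]) auto

lemma shingles_counterexample_no_large_near_clique:
  assumes "0 < \<delta>" "\<delta> < 1" "0 \<le> \<epsilon>" "\<epsilon> < min ((1 - \<delta>) / (1 + \<delta>)) (1/9)"
    and "even n" "2 / (1 - \<delta>) \<le> real n"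
    and "size_threshold \<delta> \<epsilon> \<le> real n"
    and "inj_on ids {0..<n}" "D \<in> candidate_sets n (shingles_counterexample \<delta> n) ids"
  shows "\<not> (near_clique \<epsilon> (shingles_counterexample \<delta> n) D \<and> (1 - \<epsilon>) * \<delta> * real n \<le> real (card D))"
proof -
  interpret sized_four_block_graph n "block_of (clique_half \<delta> n) (side_size \<delta> n)"
    "clique_half \<delta> n" "side_size \<delta> n" \<delta> \<epsilon>
    using assms(1-7) by (rule sized_four_block_graph_block_of)
  show ?thesis
    using no_large_near_clique_candidate assms(8,9) unfolding shingles_counterexample_def by blast
qed

theorem claim3p1:
  fixes \<delta> :: real
  assumes "0 < \<delta>" and "\<delta> < 1"
  shows "\<exists>S :: nat set. \<exists>G :: nat \<Rightarrow> (nat \<Rightarrow> nat \<Rightarrow> bool).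
     infinite S \<and>
     (\<forall>n\<in>S. simple_graph n (G n) \<and>
        (\<exists>C. C \<subseteq> {0..<n} \<and> is_clique (G n) C \<and> real (card C) \<ge> \<delta> * real n)) \<and>
     (\<forall>\<epsilon>::real. 0 \<le> \<epsilon> \<and> \<epsilon> < min ((1 - \<delta>) / (1 + \<delta>)) (1 / 9) \<longrightarrow>
        (\<exists>N. \<forall>n\<in>S. n \<ge> N \<longrightarrow>
           (\<forall>ids :: nat \<Rightarrow> nat. inj_on ids {0..<n} \<longrightarrow>
              (\<forall>D\<in>candidate_sets n (G n) ids.
                 \<not> (near_clique \<epsilon> (G n) D \<and>
                    real (card D) \<ge> (1 - \<epsilon>) * \<delta> * real n)))))"
proof -
  define S where "S = {n :: nat. even n \<and> 2 / (1 - \<delta>) \<le> real n}"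
  let ?G = "shingles_counterexample \<delta>"
  have "infinite S" unfolding S_def by (rule infinite_even_at_least)
  moreover have "\<forall>n\<in>S. simple_graph n (?G n) \<and>
      (\<exists>C. C \<subseteq> {0..<n} \<and> is_clique (?G n) C \<and> real (card C) \<ge> \<delta> * real n)"
    using shingles_counterexample_has_large_clique[OF assms]
    by (simp add: S_def shingles_counterexample_def simple_graph_block_graph)
  moreover have "\<exists>N. \<forall>n\<in>S. n \<ge> N \<longrightarrow> (\<forall>ids. inj_on ids {0..<n} \<longrightarrow>
      (\<forall>D\<in>candidate_sets n (?G n) ids.
         \<not> (near_clique \<epsilon> (?G n) D \<and> real (card D) \<ge> (1 - \<epsilon>) * \<delta> * real n)))"
    if "0 \<le> \<epsilon> \<and> \<epsilon> < min ((1 - \<delta>) / (1 + \<delta>)) (1 / 9)" for \<epsilon>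
  proof -
    let ?bound = "size_threshold \<delta> \<epsilon>"
    have "?bound \<le> real n" if "nat \<lceil>?bound\<rceil> \<le> n" for n :: nat
      using real_nat_ceiling_ge[of ?bound] that by linarith
    with that assms show ?thesis
      by (intro exI[of _ "nat \<lceil>?bound\<rceil>"] ballI impI allI shingles_counterexample_no_large_near_clique)
        (auto simp: S_def)
  qed
  ultimately show ?thesis by (intro exI[of _ S] exI[of _ ?G]) blast
qed

end
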